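(* Let $\lambda^\star=\sup_{N\in\mathcal{C}}\mathbb{E}[U_N]/\mathbb{E}[T_N]$. Then the stopping rule $$N^\star=\min\Big\{n\ge1:\ R_n\,\mathbb{I}(\mathrm{SNR}_n\ge\Gamma)\ge \frac{\lambda^\star(T_{\mathrm{ra}}+T_{\mathrm{data}})}{W T_{\mathrm{data}}}\Big\}$$ is optimal (it lies in $\mathcal{C}$ and $\mathbb{E}[U_{N^\star}]/\mathbb{E}[T_{N^\star}]=\lambda^\star$), and $\lambda^\star$ is the unique positive solution $\lambda$ of $$\mathbb{E}\Big[\big(\hat R_1-\lambda(T_{\mathrm{ra}}+T_{\mathrm{data}})\big)^+\Big]=\lambda\Big(\big(L-\tfrac12\big)T_{\mathrm{syn}}+\tfrac{T_{\mathrm{sib}}-T_{\mathrm{syn}}}{2}\,\mathbb{P}(\mathrm{SNR}_1\ge\Gamma)\Big),$$ where $(x)^+=\max(x,0)$.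
   Context: Standing setup (cell search model). Fix constants $T_{\mathrm{syn}}>0$, $T_{\mathrm{sib}}\ge T_{\mathrm{syn}}$ with $T_{\mathrm{sib}}/T_{\mathrm{syn}}$ a positive integer, $T_{\mathrm{ra}}>0$, $T_{\mathrm{data}}>0$, $W>0$, an integer $L\ge1$, and a real threshold $\Gamma$. Let $(\mathrm{SNR}_i,\beta_i,Y_i,Z_i)_{i\ge1}$ be independent and identically distributed random tuples with $\mathrm{SNR}_i\ge0$, $\beta_i\in[0,1]$, $Y_i\ge0$ with $\mathbb{E}[Y_i]=T_{\mathrm{syn}}/2$, and $Z_i$ uniformly distributed on $\{jT_{\mathrm{syn}}: j=0,1,\dots,T_{\mathrm{sib}}/T_{\mathrm{syn}}-1\}$ and independent of $\mathrm{SNR}_i$. The selection metric of cell $i$ is $R_i=\beta_i\log(1+\mathrm{SNR}_i)$, and $\mathbb{E}[R_1^2]<\infty$; assume $\mathbb{P}(R_1\,\mathbb{I}(\mathrm{SNR}_1\ge\Gamma)>0)>0$. Define $\hat R_n=W T_{\mathrm{data}}R_n\,\mathbb{I}(\mathrm{SNR}_n\ge\Gamma)$ and, for $n\ge1$, $$T_n=\sum_{i=1}^n\Big(Y_i+(L-1)T_{\mathrm{syn}}+Z_i\,\mathbb{I}(\mathrm{SNR}_i\ge\Gamma)\Big)+T_{\mathrm{ra}}+T_{\mathrm{data}},\qquad U_n=\max_{1\le i\le n}\hat R_i.$$ $\mathcal{C}$ denotes the set of stopping times $N\ge1$ with respect to the filtration generated by $(\mathrm{SNR}_i,\beta_i,Y_i,Z_i)_{i\le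 n}$ such that $\mathbb{E}[T_N]<\infty$. *)

theory Defs
  imports "HOL-Probability.Probability"
begin

definition ind :: "bool \<Rightarrow> real" where
  "ind b = (if b then 1 else 0)"

definition Rsel :: "(nat \<Rightarrow> 'a \<Rightarrow> real) \<Rightarrow> (nat \<Rightarrow> 'a \<Rightarrow> real) \<Rightarrow> nat \<Rightarrow> 'a \<Rightarrow> real" where
  "Rsel beta SNR i \<omega> = beta i \<omega> * ln (1 + SNR i \<omega>)"

definition Rhat :: "real \<Rightarrow> real \<Rightarrow> real \<Rightarrow> (nat \<Rightarrow> 'a \<Rightarrow> real) \<Rightarrow> (nat \<Rightarrow> 'a \<Rightarrow> real)
    \<Rightarrow> nat \<Rightarrow> 'a \<Rightarrow> real" where
  "Rhat W Tdata \<Gamma> beta SNR n \<omega> = W * Tdata * Rsel beta SNR n \<omega> * ind (SNR n \<omega> \<ge> \<Gamma>)"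

definition Ttime :: "real \<Rightarrow> nat \<Rightarrow> real \<Rightarrow> real \<Rightarrow> real \<Rightarrow> (nat \<Rightarrow> 'a \<Rightarrow> real)
    \<Rightarrow> (nat \<Rightarrow> 'a \<Rightarrow> real) \<Rightarrow> (nat \<Rightarrow> 'a \<Rightarrow> real) \<Rightarrow> nat \<Rightarrow> 'a \<Rightarrow> real" where
  "Ttime Tsyn L Tra Tdata \<Gamma> SNR Y Z n \<omega> =
     (\<Sum>i=1..n. Y i \<omega> + (real L - 1) * Tsyn + Z i \<omega> * ind (SNR i \<omega> \<ge> \<Gamma>)) + Tra + Tdata"

text \<open>U_n = max_{1 \<le> i \<le> n} Rhat_i (only used for n \<ge> 1).\<close>
definition Umax :: "(nat \<Rightarrow> 'a \<Rightarrow> real) \<Rightarrow> nat \<Rightarrow> 'a \<Rightarrow> real" where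
  "Umax Rh n \<omega> = Max ((\<lambda>i. Rh i \<omega>) ` {1..n})"

definition obs :: "(nat \<Rightarrow> 'a \<Rightarrow> real) \<Rightarrow> (nat \<Rightarrow> 'a \<Rightarrow> real) \<Rightarrow> (nat \<Rightarrow> 'a \<Rightarrow> real)
    \<Rightarrow> (nat \<Rightarrow> 'a \<Rightarrow> real) \<Rightarrow> nat \<Rightarrow> 'a \<Rightarrow> real \<times> real \<times> real \<times> real" where
  "obs SNR beta Y Z i \<omega> = (SNR i \<omega>, beta i \<omega>, Y i \<omega>, Z i \<omega>)"

definition filt :: "'a measure \<Rightarrow> (nat \<Rightarrow> 'a \<Rightarrow> real \<times> real \<times> real \<times> real) \<Rightarrow> nat \<Rightarrow> 'a measure" where
  "filt M X n = sigma (space M) {X i -` A \<inter> space M | i A. i \<in> {1..n} \<and> A \<in> sets borel}"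

definition stop_time_ge1 :: "'a measure \<Rightarrow> (nat \<Rightarrow> 'a measure) \<Rightarrow> ('a \<Rightarrow> enat) \<Rightarrow> bool" where
  "stop_time_ge1 M F N \<longleftrightarrow> (\<forall>\<omega>\<in>space M. 1 \<le> N \<omega>) \<and>
     (\<forall>n. {\<omega> \<in> space M. N \<omega> = enat n} \<in> sets (F n))"

definition stopped :: "(nat \<Rightarrow> 'a \<Rightarrow> real) \<Rightarrow> ('a \<Rightarrow> enat) \<Rightarrow> 'a \<Rightarrow> ennreal" where
  "stopped f N \<omega> = (case N \<omega> of enat n \<Rightarrow> ennreal (f n \<omega>) | \<infinity> \<Rightarrow> \<top>)"

definition classC :: "'a measure \<Rightarrow> (nat \<Rightarrow> 'a measure) \<Rightarrow> (nat \<Rightarrow> 'a \<Rightarrow> real) \<Rightarrow> ('a \<Rightarrow> enat) set" where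
  "classC M F T = {N. stop_time_ge1 M F N \<and> (\<integral>\<^sup>+ \<omega>. stopped T N \<omega> \<partial>M) < \<top>}"

definition rate :: "'a measure \<Rightarrow> (nat \<Rightarrow> 'a \<Rightarrow> real) \<Rightarrow> (nat \<Rightarrow> 'a \<Rightarrow> real) \<Rightarrow> ('a \<Rightarrow> enat) \<Rightarrow> ennreal" where
  "rate M U T N = (\<integral>\<^sup>+ \<omega>. stopped U N \<omega> \<partial>M) / (\<integral>\<^sup>+ \<omega>. stopped T N \<omega> \<partial>M)"

definition first_ge1 :: "(nat \<Rightarrow> bool) \<Rightarrow> enat" where
  "first_ge1 P = (if \<exists>n\<ge>1. P n then enat (LEAST n. 1 \<le> n \<and> P n) else \<infinity>)"

end

(*
  Write D = T_ra + T_data for the fixed overhead, c for the mean search time of one cell and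
  F(x) = E[(Rhat_1 - x D)^+] for the expected overshoot of a reward over the threshold x D.
  For every admissible N, U_N <= x D + sum_{i <= N} (Rhat_i - x D)^+. The event {N >= i} is
  determined by the first i - 1 cells and hence independent of cell i, so Wald's identity gives
  E[U_N] <= x D + F(x) E[N] and E[T_N] = D + c E[N]. The function x c - F(x) is continuous,
  strictly increasing and negative at 0, so it has a unique positive root lambda, and there the
  two identities combine to E[U_N] <= lambda E[T_N]. The rule stopping at the first
  Rhat_n >= lambda D has finite mean and attains equality, so lambda is the optimal rate.
*)
theory Submission
  imports Defs
begin

lemma suminf_ennreal_one_eq_top: "(\<Sum>i::nat. (1::ennreal)) = \<top>"
proof (rule ccontr)
  assume "(\<Sum>i::nat. (1::ennreal)) \<noteq> \<top>"
  then have "summable (\<lambda>i::nat. 1::real)"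
    using summable_suminf_not_top[of "\<lambda>_. 1::real"] by simp
  then show False by (simp add: summable_const_iff)
qed

lemma ennreal_add_sum_max_0:
  assumes "0 \<le> v"
  shows "ennreal (v + (\<Sum>i\<in>I. max (f i) 0)) = ennreal v + (\<Sum>i\<in>I. ennreal (f i))"
proof -
  have "(\<Sum>i\<in>I. ennreal (max (f i) 0)) = ennreal (\<Sum>i\<in>I. max (f i) 0)"
    by (rule sum_ennreal) simp
  then show ?thesis using assms by (simp add: sum_nonneg ennreal_plus del: sum_ennreal)
qed

lemma first_ge1_eq_enat_iff:
  "first_ge1 P = enat n \<longleftrightarrow> 1 \<le> n \<and> P n \<and> (\<forall>m. 1 \<le> m \<and> m < n \<longrightarrow> \<not> P m)"
proof
  assume "first_ge1 P = enat n"
  then have ex: "\<exists>n\<ge>1. P n" and n: "n = (LEAST n. 1 \<le> n \<and> P n)"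
    unfolding first_ge1_def by (auto split: if_splits)
  from ex have "1 \<le> n \<and> P n" unfolding n by (metis (mono_tags, lifting) LeastI_ex)
  moreover have "\<forall>m. 1 \<le> m \<and> m < n \<longrightarrow> \<not> P m"
    unfolding n using not_less_Least by blast
  ultimately show "1 \<le> n \<and> P n \<and> (\<forall>m. 1 \<le> m \<and> m < n \<longrightarrow> \<not> P m)" by blast
next
  assume n: "1 \<le> n \<and> P n \<and> (\<forall>m. 1 \<le> m \<and> m < n \<longrightarrow> \<not> P m)"
  then have "(LEAST n. 1 \<le> n \<and> P n) = n"
    by (intro Least_equality) (auto simp: not_less[symmetric])
  then show "first_ge1 P = enat n" using n unfolding first_ge1_def by auto
qed

lemma first_ge1_eq_infinity_iff: "first_ge1 P = \<infinity> \<longleftrightarrow> (\<forall>n\<ge>1. \<not> P n)"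
  unfolding first_ge1_def by auto

lemma one_le_first_ge1: "1 \<le> first_ge1 P"
  unfolding first_ge1_def
  by (auto simp: one_enat_def) (metis (mono_tags, lifting) LeastI_ex)

locale iid_process = prob_space +
  fixes X :: "nat \<Rightarrow> 'a \<Rightarrow> real \<times> real \<times> real \<times> real"
  assumes measurable_X[measurable]: "\<And>i. X i \<in> borel_measurable M"
    and indep_X: "indep_vars (\<lambda>_. borel) X {1..}"
    and distr_X: "\<And>i. i \<ge> 1 \<Longrightarrow> distr M borel (X i) = distr M borel (X 1)"
begin

definition events_of :: "nat \<Rightarrow> 'a set set" where
  "events_of i = {X i -` A \<inter> space M | A. A \<in> sets borel}"

lemma events_of_subset: "events_of i \<subseteq> sets M"
  unfolding events_of_def by (auto intro: measurable_sets)

lemma filt_generator_eq: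
  "{X i -` A \<inter> space M | i A. i \<in> {1..n} \<and> A \<in> sets borel} = (\<Union>i\<in>{1..n}. events_of i)"
  unfolding events_of_def by blast

lemma sets_filt: "sets (filt M X n) = sigma_sets (space M) (\<Union>i\<in>{1..n}. events_of i)"
  unfolding filt_def filt_generator_eq
  by (rule sets_measure_of) (use events_of_subset sets.sets_into_space in blast)

lemma space_filt: "space (filt M X n) = space M"
  unfolding filt_def filt_generator_eq
  by (rule space_measure_of) (use events_of_subset sets.sets_into_space in blast)

lemma sets_filt_mono: "m \<le> n \<Longrightarrow> sets (filt M X m) \<subseteq> sets (filt M X n)"
  unfolding sets_filt by (rule sigma_sets_mono') force

lemma sets_filt_subset: "sets (filt M X n) \<subseteq> sets M"
  unfolding sets_filt by (rule sets.sigma_sets_subset) (use events_of_subset in blast)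

lemma vimage_in_sets_filt:
  "i \<in> {1..n} \<Longrightarrow> B \<in> sets borel \<Longrightarrow> X i -` B \<inter> space M \<in> sets (filt M X n)"
  unfolding sets_filt events_of_def by (rule sigma_sets.Basic) blast

lemma indep_set_filt_next:
  "indep_set (sets (filt M X n)) (sigma_sets (space M) (events_of (Suc n)))"
proof -
  let ?I = "\<lambda>b. if b then {1..n} else {Suc n}"
  have "indep_sets events_of {1..}"
    using indep_X unfolding indep_vars_def2 events_of_def by simp
  then have "indep_sets events_of (\<Union>b. ?I b)"
    by (rule indep_sets_mono_index[rotated]) auto
  then have "indep_sets (\<lambda>b. sigma_sets (space M) (\<Union>i\<in>?I b. events_of i)) UNIV"
  proof (rule indep_sets_collect_sigma)
    show "Int_stable (events_of i)" for i
      unfolding events_of_def Int_stable_def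
      by clarsimp (metis (no_types, lifting) Int_assoc inf_left_commute sets.Int vimage_Int
          inf.idem Int_commute)
  qed (auto simp: disjoint_family_on_def)
  then show ?thesis
    unfolding indep_set_def sets_filt
    by (rule indep_sets_cong[THEN iffD1, rotated 2]) (auto split: bool.split)
qed

lemma nn_integral_X_eq_X1:
  assumes "i \<ge> 1" and [measurable]: "f \<in> borel_measurable borel"
  shows "(\<integral>\<^sup>+\<omega>. ennreal (f (X i \<omega>)) \<partial>M) = (\<integral>\<^sup>+\<omega>. ennreal (f (X 1 \<omega>)) \<partial>M)"
proof -
  have "(\<integral>\<^sup>+\<omega>. ennreal (f (X i \<omega>)) \<partial>M) = (\<integral>\<^sup>+x. ennreal (f x) \<partial>distr M borel (X i))"
    by (subst nn_integral_distr) auto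
  also have "\<dots> = (\<integral>\<^sup>+x. ennreal (f x) \<partial>distr M borel (X 1))"
    using distr_X[OF assms(1)] by simp
  also have "\<dots> = (\<integral>\<^sup>+\<omega>. ennreal (f (X 1 \<omega>)) \<partial>M)"
    by (subst nn_integral_distr) auto
  finally show ?thesis .
qed

lemma subalgebra_filt: "subalgebra M (filt M X n)"
  by (simp add: subalgebra_def space_filt sets_filt_subset)

lemma indep_var_filt_next:
  fixes g :: "'a \<Rightarrow> 'b::topological_space" and f :: "real \<times> real \<times> real \<times> real \<Rightarrow> 'b"
  assumes g: "g \<in> borel_measurable (filt M X n)" and [measurable]: "f \<in> borel_measurable borel"
  shows "indep_var borel g borel (\<lambda>\<omega>. f (X (Suc n) \<omega>))"
  unfolding indep_var_eq
proof (intro conjI)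
  show "random_variable borel g"
    by (rule measurable_from_subalg[OF subalgebra_filt g])
  show "random_variable borel (\<lambda>\<omega>. f (X (Suc n) \<omega>))" by simp
  have "{g -` B \<inter> space M | B. B \<in> sets borel} \<subseteq> sets (filt M X n)"
    using measurable_sets[OF g] by (auto simp: space_filt)
  then have past: "sigma_sets (space M) {g -` B \<inter> space M | B. B \<in> sets borel} \<subseteq> sets (filt M X n)"
    using sets.sigma_sets_subset[of _ "filt M X n"] by (simp add: space_filt)
  have "{(\<lambda>\<omega>. f (X (Suc n) \<omega>)) -` B \<inter> space M | B. B \<in> sets borel} \<subseteq> events_of (Suc n)"
    unfolding events_of_def
  proof safe
    fix B :: "'b set" assume "B \<in> sets borel"
    then have "f -` B \<in> sets borel" using measurable_sets[of f borel borel B] by simp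
    then show "\<exists>C. (\<lambda>\<omega>. f (X (Suc n) \<omega>)) -` B \<inter> space M = X (Suc n) -` C \<inter> space M \<and> C \<in> sets borel"
      by (intro exI[of _ "f -` B"]) auto
  qed
  then have next_obs:
      "sigma_sets (space M) {(\<lambda>\<omega>. f (X (Suc n) \<omega>)) -` B \<inter> space M | B. B \<in> sets borel}
      \<subseteq> sigma_sets (space M) (events_of (Suc n))"
    by (rule sigma_sets_mono')
  show "indep_set (sigma_sets (space M) {g -` B \<inter> space M | B. B \<in> sets borel})
      (sigma_sets (space M) {(\<lambda>\<omega>. f (X (Suc n) \<omega>)) -` B \<inter> space M | B. B \<in> sets borel})"
    unfolding indep_set_def
    by (rule indep_sets_mono_sets[OF indep_set_filt_next[of n, unfolded indep_set_def]])
      (use past next_obs in \<open>auto split: bool.split\<close>)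
qed

lemma nn_integral_next_mult_indicator:
  assumes A: "A \<in> sets (filt M X n)" and [measurable]: "f \<in> borel_measurable borel"
  shows "(\<integral>\<^sup>+\<omega>. ennreal (f (X (Suc n) \<omega>)) * indicator A \<omega> \<partial>M)
          = emeasure M A * (\<integral>\<^sup>+\<omega>. ennreal (f (X 1 \<omega>)) \<partial>M)"
proof -
  let ?past = "\<lambda>\<omega>. ennreal (indicator A \<omega>)" and ?next = "\<lambda>\<omega>. ennreal (f (X (Suc n) \<omega>))"
  have "indep_var borel ?past borel ?next"
    by (rule indep_var_filt_next) (use A in simp_all)
  moreover have "case_bool borel borel = (\<lambda>_::bool. borel :: ennreal measure)"
    by (simp add: fun_eq_iff split: bool.split)
  ultimately have "indep_vars (\<lambda>_. borel) (case_bool ?past ?next) UNIV"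
    unfolding indep_var_def by simp
  from indep_vars_nn_integral[OF _ this]
  have "(\<integral>\<^sup>+\<omega>. ?next \<omega> * ?past \<omega> \<partial>M) = (\<integral>\<^sup>+\<omega>. ?next \<omega> \<partial>M) * (\<integral>\<^sup>+\<omega>. ?past \<omega> \<partial>M)"
    by (simp add: UNIV_bool)
  moreover have "A \<in> sets M" using A sets_filt_subset by blast
  ultimately show ?thesis
    using nn_integral_X_eq_X1[of "Suc n" f] by (simp add: ennreal_indicator mult.commute)
qed

definition running :: "('a \<Rightarrow> enat) \<Rightarrow> nat \<Rightarrow> 'a set" where
  "running N i = {\<omega>\<in>space M. enat (Suc i) \<le> N \<omega>}"

lemma running_in_sets_filt:
  assumes "stop_time_ge1 M (filt M X) N"
  shows "running N i \<in> sets (filt M X i)"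
proof -
  have "running N i = space M - (\<Union>k\<in>{..i}. {\<omega>\<in>space M. N \<omega> = enat k})"
  proof -
    have "enat (Suc i) \<le> x \<longleftrightarrow> (\<forall>k\<le>i. x \<noteq> enat k)" for x :: enat
      by (cases x) (auto simp: not_less_eq_eq[symmetric])
    then show ?thesis unfolding running_def by auto
  qed
  moreover have "{\<omega>\<in>space M. N \<omega> = enat k} \<in> sets (filt M X i)" if "k \<le> i" for k
    using assms sets_filt_mono[OF that] unfolding stop_time_ge1_def by blast
  ultimately show ?thesis
    using sets.top[of "filt M X i"] by (auto simp: space_filt)
qed

lemma running_in_sets: "stop_time_ge1 M (filt M X) N \<Longrightarrow> running N i \<in> sets M"
  using running_in_sets_filt sets_filt_subset by blast

lemma suminf_indicator_running_enat:
  assumes "\<omega> \<in> space M" "N \<omega> = enat n"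
  shows "(\<Sum>i. (g i :: ennreal) * indicator (running N i) \<omega>) = (\<Sum>i<n. g i)"
  by (subst suminf_finite[of "{..<n}"]) (use assms in \<open>auto simp: running_def\<close>)

lemma suminf_indicator_running_infinity:
  assumes "\<omega> \<in> space M" "N \<omega> = \<infinity>"
  shows "(\<Sum>i. (g i :: ennreal) * indicator (running N i) \<omega>) = (\<Sum>i. g i)"
  using assms unfolding running_def by simp

lemma stop_time_ge1_infinity_in_sets:
  assumes "stop_time_ge1 M (filt M X) N"
  shows "{\<omega>\<in>space M. N \<omega> = \<infinity>} \<in> sets M"
proof -
  have "{\<omega>\<in>space M. N \<omega> = \<infinity>} = space M - (\<Union>n. {\<omega>\<in>space M. N \<omega> = enat n})"
    by auto
  moreover have "{\<omega>\<in>space M. N \<omega> = enat n} \<in> sets M" for n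
    using assms sets_filt_subset unfolding stop_time_ge1_def by blast
  ultimately show ?thesis by auto
qed

lemma AE_stop_time_finite:
  assumes N: "stop_time_ge1 M (filt M X) N"
    and top: "\<And>\<omega>. \<omega> \<in> space M \<Longrightarrow> N \<omega> = \<infinity> \<Longrightarrow> f \<omega> = \<top>"
    and finite: "(\<integral>\<^sup>+\<omega>. f \<omega> \<partial>M) < \<top>"
  shows "AE \<omega> in M. N \<omega> \<noteq> \<infinity>"
proof -
  let ?I = "{\<omega>\<in>space M. N \<omega> = \<infinity>}"
  have I[measurable]: "?I \<in> sets M" by (rule stop_time_ge1_infinity_in_sets[OF N])
  have "\<top> * emeasure M ?I = (\<integral>\<^sup>+\<omega>. \<top> * indicator ?I \<omega> \<partial>M)"
    by (simp add: nn_integral_cmult_indicator)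
  also have "\<dots> \<le> (\<integral>\<^sup>+\<omega>. f \<omega> \<partial>M)"
    by (intro nn_integral_mono) (auto simp: top split: split_indicator)
  finally have "\<top> * emeasure M ?I < \<top>"
    using finite by (rule order_le_less_trans)
  then have "emeasure M ?I = 0"
    by (simp add: ennreal_top_mult split: if_splits)
  then show ?thesis
    using AE_iff_measurable[OF I, of "\<lambda>\<omega>. N \<omega> \<noteq> \<infinity>"] by simp
qed

text \<open>Since \<open>\<Sum>\<^sub>i 1{N > i} = N\<close>, this is \<open>E[N]\<close>.\<close>
definition expected_stop :: "('a \<Rightarrow> enat) \<Rightarrow> ennreal" where
  "expected_stop N = (\<integral>\<^sup>+\<omega>. (\<Sum>i. indicator (running N i) \<omega>) \<partial>M)"

lemma wald_identity:
  assumes N: "stop_time_ge1 M (filt M X) N" and [measurable]: "f \<in> borel_measurable borel"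
  shows "(\<integral>\<^sup>+\<omega>. (\<Sum>i. ennreal (f (X (Suc i) \<omega>)) * indicator (running N i) \<omega>) \<partial>M)
        = (\<integral>\<^sup>+\<omega>. ennreal (f (X 1 \<omega>)) \<partial>M) * expected_stop N"
proof -
  note [measurable] = running_in_sets[OF N]
  have "(\<integral>\<^sup>+\<omega>. (\<Sum>i. ennreal (f (X (Suc i) \<omega>)) * indicator (running N i) \<omega>) \<partial>M)
      = (\<Sum>i. \<integral>\<^sup>+\<omega>. ennreal (f (X (Suc i) \<omega>)) * indicator (running N i) \<omega> \<partial>M)"
    by (rule nn_integral_suminf) simp
  also have "\<dots> = (\<Sum>i. emeasure M (running N i) * (\<integral>\<^sup>+\<omega>. ennreal (f (X 1 \<omega>)) \<partial>M))"
    using nn_integral_next_mult_indicator[OF running_in_sets_filt[OF N]] by simp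
  also have "\<dots> = (\<integral>\<^sup>+\<omega>. ennreal (f (X 1 \<omega>)) \<partial>M) * (\<Sum>i. emeasure M (running N i))"
    by (simp add: mult.commute)
  also have "(\<Sum>i. emeasure M (running N i)) = expected_stop N"
    unfolding expected_stop_def by (subst nn_integral_suminf) auto
  finally show ?thesis .
qed

end

text \<open>Observation \<open>i\<close> yields the reward \<open>reward (X i)\<close> and costs the time \<open>cost (X i)\<close>;
  the overhead \<open>D\<close> is paid once, when the search stops.\<close>
locale reward_cost_stopping = iid_process +
  fixes reward cost :: "real \<times> real \<times> real \<times> real \<Rightarrow> real" and D :: real
  assumes reward_measurable[measurable]: "reward \<in> borel_measurable borel"
    and cost_measurable[measurable]: "cost \<in> borel_measurable borel"
    and D_pos: "D > 0"
    and reward_nonneg: "\<And>i \<omega>. i \<ge> 1 \<Longrightarrow> \<omega> \<in> space M \<Longrightarrow> 0 \<le> reward (X i \<omega>)"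
    and cost_nonneg: "\<And>i. i \<ge> 1 \<Longrightarrow> AE \<omega> in M. 0 \<le> cost (X i \<omega>)"
    and reward_integrable: "integrable M (\<lambda>\<omega>. reward (X 1 \<omega>))"
    and cost_integrable: "integrable M (\<lambda>\<omega>. cost (X 1 \<omega>))"
    and integral_cost_pos: "(\<integral>\<omega>. cost (X 1 \<omega>) \<partial>M) > 0"
    and reward_pos: "prob {\<omega>\<in>space M. reward (X 1 \<omega>) > 0} > 0"
begin

definition mean_cost :: real where
  "mean_cost = (\<integral>\<omega>. cost (X 1 \<omega>) \<partial>M)"

lemma mean_cost_pos: "0 < mean_cost"
  unfolding mean_cost_def by (rule integral_cost_pos)

definition excess :: "real \<Rightarrow> real" where
  "excess x = (\<integral>\<omega>. max (reward (X 1 \<omega>) - x * D) 0 \<partial>M)"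

lemma integrable_excess: "integrable M (\<lambda>\<omega>. max (reward (X 1 \<omega>) - x * D) 0)"
  using reward_integrable by (intro integrable_max) auto

lemma excess_antimono: "x \<le> y \<Longrightarrow> excess y \<le> excess x"
  unfolding excess_def
proof (rule integral_mono[OF integrable_excess integrable_excess])
  fix \<omega> assume "x \<le> y"
  then have "x * D \<le> y * D" using D_pos by (simp add: mult_right_mono)
  then show "max (reward (X 1 \<omega>) - y * D) 0 \<le> max (reward (X 1 \<omega>) - x * D) 0"
    by (simp add: max_def)
qed

lemma excess_le_excess_plus: "excess x \<le> excess y + D * \<bar>x - y\<bar>"
proof -
  have "excess x \<le> (\<integral>\<omega>. max (reward (X 1 \<omega>) - y * D) 0 + D * \<bar>x - y\<bar> \<partial>M)"
    unfolding excess_def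
  proof (intro integral_mono integrable_excess Bochner_Integration.integrable_add
      integrable_const)
    fix \<omega>
    have "reward (X 1 \<omega>) - x * D \<le> reward (X 1 \<omega>) - y * D + D * \<bar>x - y\<bar>"
      using D_pos by (auto simp: abs_if algebra_simps)
    then show "max (reward (X 1 \<omega>) - x * D) 0 \<le> max (reward (X 1 \<omega>) - y * D) 0 + D * \<bar>x - y\<bar>"
      using D_pos by auto
  qed
  also have "\<dots> = excess y + D * \<bar>x - y\<bar>"
    unfolding excess_def using integrable_excess by (simp add: prob_space)
  finally show ?thesis .
qed

lemma continuous_on_excess: "continuous_on A excess"
proof (rule lipschitz_on_continuous_on)
  show "D-lipschitz_on A excess"
  proof (rule lipschitz_onI)
    show "dist (excess x) (excess y) \<le> D * dist x y" for x y
      using excess_le_excess_plus[of x y] excess_le_excess_plus[of y x]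
      by (auto simp: dist_real_def abs_minus_commute)
  qed (use D_pos in simp)
qed

lemma excess_0_pos: "excess 0 > 0"
proof -
  have nonneg: "AE \<omega> in M. 0 \<le> reward (X 1 \<omega>)" using reward_nonneg by auto
  have excess_0: "excess 0 = (\<integral>\<omega>. reward (X 1 \<omega>) \<partial>M)"
    unfolding excess_def using reward_nonneg by (intro Bochner_Integration.integral_cong) auto
  have "excess 0 \<noteq> 0"
  proof
    assume "excess 0 = 0"
    then have "AE \<omega> in M. reward (X 1 \<omega>) = 0"
      using integral_nonneg_eq_0_iff_AE[OF reward_integrable nonneg] excess_0 by simp
    then have "emeasure M {\<omega>\<in>space M. reward (X 1 \<omega>) > 0} = 0"
      by (intro emeasure_eq_0_AE) auto
    then show False using reward_pos by (simp add: measure_def)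
  qed
  moreover have "excess 0 \<ge> 0" unfolding excess_0 using nonneg by (simp add: integral_nonneg_AE)
  ultimately show ?thesis by simp
qed

lemma ex1_excess_fixed_point: "\<exists>!l. 0 < l \<and> excess l = l * mean_cost"
proof -
  define H where "H x = x * mean_cost - excess x" for x
  have H_strict_mono: "x < y \<Longrightarrow> H x < H y" for x y
    unfolding H_def using excess_antimono[of x y] mean_cost_pos
    by (smt (verit) mult_strict_right_mono)
  define b where "b = excess 0 / mean_cost + 1"
  have b: "b > 0" using excess_0_pos mean_cost_pos unfolding b_def
    by (simp add: add_pos_nonneg)
  have "excess b \<le> excess 0" by (rule excess_antimono) (use b in simp)
  also have "\<dots> \<le> b * mean_cost"
    using mean_cost_pos unfolding b_def by (simp add: field_simps)
  finally have "H b \<ge> 0" unfolding H_def by simp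
  moreover have "H 0 \<le> 0" unfolding H_def using excess_0_pos by simp
  moreover have "continuous_on {0..b} H"
    unfolding H_def by (intro continuous_intros continuous_on_excess)
  ultimately obtain l where l: "0 \<le> l" "H l = 0"
    using IVT'[of H 0 0 b] b by auto
  with excess_0_pos have "0 < l" unfolding H_def by (cases "l = 0") auto
  have unique: "x = l" if "H x = 0" for x
    using H_strict_mono[of x l] H_strict_mono[of l x] l that
    by (cases x l rule: linorder_cases) auto
  show ?thesis
  proof (rule ex1I[of _ l])
    show "0 < l \<and> excess l = l * mean_cost" using \<open>0 < l\<close> l unfolding H_def by simp
    show "x = l" if "0 < x \<and> excess x = x * mean_cost" for x
      using unique that unfolding H_def by simp
  qed
qed

definition opt_rate :: real where
  "opt_rate = (THE l. 0 < l \<and> excess l = l * mean_cost)"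

lemma opt_rate_pos: "0 < opt_rate" and excess_opt_rate: "excess opt_rate = opt_rate * mean_cost"
  using theI'[OF ex1_excess_fixed_point] unfolding opt_rate_def by auto

lemma excess_eq_iff_opt_rate: "0 < x \<Longrightarrow> excess x = x * mean_cost \<longleftrightarrow> x = opt_rate"
  using ex1_excess_fixed_point opt_rate_pos excess_opt_rate by blast

definition reward_at :: "nat \<Rightarrow> 'a \<Rightarrow> real" where
  "reward_at n \<omega> = reward (X n \<omega>)"

definition time_at :: "nat \<Rightarrow> 'a \<Rightarrow> real" where
  "time_at n \<omega> = (\<Sum>i=1..n. cost (X i \<omega>)) + D"

lemma nn_integral_cost: "(\<integral>\<^sup>+\<omega>. ennreal (cost (X 1 \<omega>)) \<partial>M) = ennreal mean_cost"
  using nn_integral_eq_integral[OF cost_integrable] cost_nonneg[of 1] unfolding mean_cost_def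
  by simp

lemma nn_integral_excess:
  "(\<integral>\<^sup>+\<omega>. ennreal (reward (X 1 \<omega>) - x * D) \<partial>M) = ennreal (excess x)"
  unfolding excess_def using nn_integral_eq_integral[OF integrable_excess] by simp

lemma nn_integral_stopped_time_at:
  assumes N: "stop_time_ge1 M (filt M X) N" and finite: "AE \<omega> in M. N \<omega> \<noteq> \<infinity>"
  shows "(\<integral>\<^sup>+\<omega>. stopped time_at N \<omega> \<partial>M) = ennreal D + ennreal mean_cost * expected_stop N"
proof -
  note [measurable] = running_in_sets[OF N]
  have "AE \<omega> in M. \<forall>i. 0 \<le> cost (X (Suc i) \<omega>)"
    using cost_nonneg by (subst AE_all_countable) auto
  then have "AE \<omega> in M. stopped time_at N \<omega>
      = ennreal D + (\<Sum>i. ennreal (cost (X (Suc i) \<omega>)) * indicator (running N i) \<omega>)"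
    using finite AE_space
  proof eventually_elim
    case (elim \<omega>)
    then obtain n where n: "N \<omega> = enat n" by auto
    have "stopped time_at N \<omega> = ennreal ((\<Sum>i<n. cost (X (Suc i) \<omega>)) + D)"
      unfolding stopped_def time_at_def using n by (simp add: sum.atLeast1_atMost_eq)
    also have "\<dots> = (\<Sum>i<n. ennreal (cost (X (Suc i) \<omega>))) + ennreal D"
      using elim D_pos by (simp add: sum_nonneg ennreal_plus)
    finally show ?case
      using suminf_indicator_running_enat[where N=N, OF elim(3) n] by (simp add: add.commute)
  qed
  then have "(\<integral>\<^sup>+\<omega>. stopped time_at N \<omega> \<partial>M)
     = (\<integral>\<^sup>+\<omega>. ennreal D + (\<Sum>i. ennreal (cost (X (Suc i) \<omega>)) * indicator (running N i) \<omega>) \<partial>M)"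
    by (rule nn_integral_cong_AE)
  also have "\<dots> = ennreal D
      + (\<integral>\<^sup>+\<omega>. (\<Sum>i. ennreal (cost (X (Suc i) \<omega>)) * indicator (running N i) \<omega>) \<partial>M)"
    by (subst nn_integral_add) (auto simp: emeasure_space_1)
  also have "\<dots> = ennreal D + ennreal mean_cost * expected_stop N"
    unfolding wald_identity[OF N cost_measurable] nn_integral_cost ..
  finally show ?thesis .
qed

lemma Umax_le_threshold_plus_overshoot:
  assumes "1 \<le> n" "0 \<le> v"
  shows "Umax reward_at n \<omega> \<le> v + (\<Sum>i<n. max (reward (X (Suc i) \<omega>) - v) 0)"
proof -
  have "reward_at i \<omega> \<le> v + (\<Sum>i = 1..n. max (reward (X i \<omega>) - v) 0)" if "i \<in> {1..n}" for i
  proof -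
    have "max (reward (X i \<omega>) - v) 0 \<le> (\<Sum>i\<in>{1..n}. max (reward (X i \<omega>) - v) 0)"
      by (rule member_le_sum) (use that in auto)
    then show ?thesis unfolding reward_at_def by linarith
  qed
  then show ?thesis
    unfolding Umax_def using assms by (intro Max.boundedI) (auto simp: sum.atLeast1_atMost_eq)
qed

lemma Umax_first_passage:
  assumes "first_ge1 (\<lambda>n. v \<le> reward (X n \<omega>)) = enat n"
  shows "Umax reward_at n \<omega> = v + (\<Sum>i<n. max (reward (X (Suc i) \<omega>) - v) 0)"
proof -
  from assms have n: "1 \<le> n" "v \<le> reward (X n \<omega>)"
    and below: "\<And>m. 1 \<le> m \<Longrightarrow> m < n \<Longrightarrow> reward (X m \<omega>) < v"
    unfolding first_ge1_eq_enat_iff by auto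
  then obtain m where m: "n = Suc m" by (cases n) auto
  have "Umax reward_at n \<omega> = reward (X n \<omega>)"
    unfolding Umax_def
  proof (rule Max_eqI)
    fix y assume "y \<in> (\<lambda>i. reward_at i \<omega>) ` {1..n}"
    then obtain i where "i \<in> {1..n}" "y = reward (X i \<omega>)" unfolding reward_at_def by auto
    then show "y \<le> reward (X n \<omega>)" using below[of i] n(2) by (cases "i = n") auto
  qed (use n in \<open>auto simp: reward_at_def\<close>)
  moreover have "reward (X (Suc i) \<omega>) < v" if "i < m" for i
    using below[of "Suc i"] m that by simp
  then have "(\<Sum>i<m. max (reward (X (Suc i) \<omega>) - v) 0) = 0"
    by (intro sum.neutral) (simp add: max_def less_imp_le)
  ultimately show ?thesis using m n(2) by simp
qed

lemma nn_integral_threshold_plus_overshoot: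
  assumes N: "stop_time_ge1 M (filt M X) N"
  shows "(\<integral>\<^sup>+\<omega>. ennreal (x * D)
            + (\<Sum>i. ennreal (reward (X (Suc i) \<omega>) - x * D) * indicator (running N i) \<omega>) \<partial>M)
       = ennreal (x * D) + ennreal (excess x) * expected_stop N"
proof -
  note [measurable] = running_in_sets[OF N]
  have [measurable]: "(\<lambda>y. reward y - x * D) \<in> borel_measurable borel" by measurable
  have "(\<integral>\<^sup>+\<omega>. ennreal (x * D)
            + (\<Sum>i. ennreal (reward (X (Suc i) \<omega>) - x * D) * indicator (running N i) \<omega>) \<partial>M)
      = ennreal (x * D)
        + (\<integral>\<^sup>+\<omega>. (\<Sum>i. ennreal (reward (X (Suc i) \<omega>) - x * D) * indicator (running N i) \<omega>) \<partial>M)"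
    by (subst nn_integral_add) (auto simp: emeasure_space_1)
  also have "\<dots> = ennreal (x * D) + ennreal (excess x) * expected_stop N"
    using wald_identity[OF N, of "\<lambda>y. reward y - x * D"] nn_integral_excess by simp
  finally show ?thesis .
qed

lemma nn_integral_stopped_Umax_le:
  assumes N: "stop_time_ge1 M (filt M X) N" and finite: "AE \<omega> in M. N \<omega> \<noteq> \<infinity>"
    and "0 \<le> x"
  shows "(\<integral>\<^sup>+\<omega>. stopped (Umax reward_at) N \<omega> \<partial>M)
           \<le> ennreal (x * D) + ennreal (excess x) * expected_stop N"
proof -
  have v: "0 \<le> x * D" using assms(3) D_pos by simp
  have "AE \<omega> in M. stopped (Umax reward_at) N \<omega> \<le> ennreal (x * D)
      + (\<Sum>i. ennreal (reward (X (Suc i) \<omega>) - x * D) * indicator (running N i) \<omega>)"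
    using finite AE_space
  proof eventually_elim
    case (elim \<omega>)
    then obtain n where n: "N \<omega> = enat n" by auto
    then have "1 \<le> n" using N elim unfolding stop_time_ge1_def by (auto simp: one_enat_def)
    then have "stopped (Umax reward_at) N \<omega>
        \<le> ennreal (x * D + (\<Sum>i<n. max (reward (X (Suc i) \<omega>) - x * D) 0))"
      unfolding stopped_def using n Umax_le_threshold_plus_overshoot[OF _ v]
      by (simp add: ennreal_leI)
    also have "\<dots> = ennreal (x * D) + (\<Sum>i<n. ennreal (reward (X (Suc i) \<omega>) - x * D))"
      by (rule ennreal_add_sum_max_0[OF v])
    finally show ?case
      using suminf_indicator_running_enat[where N=N, OF elim(2) n] by simp
  qed
  then show ?thesis
    unfolding nn_integral_threshold_plus_overshoot[OF N, symmetric] by (rule nn_integral_mono_AE)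
qed

definition threshold_rule :: "real \<Rightarrow> 'a \<Rightarrow> enat" where
  "threshold_rule v \<omega> = first_ge1 (\<lambda>n. v \<le> reward (X n \<omega>))"

lemma stop_time_ge1_threshold_rule: "stop_time_ge1 M (filt M X) (threshold_rule v)"
  unfolding stop_time_ge1_def
proof (intro conjI ballI allI)
  show "1 \<le> threshold_rule v \<omega>" for \<omega> unfolding threshold_rule_def by (rule one_le_first_ge1)
  fix n
  define B where "B = {x. v \<le> reward x}"
  have B: "B \<in> sets borel" unfolding B_def by measurable
  have XB: "X i -` B \<inter> space M \<in> sets (filt M X n)" if "i \<in> {1..n}" for i
    by (rule vimage_in_sets_filt[OF that B])
  show "{\<omega> \<in> space M. threshold_rule v \<omega> = enat n} \<in> sets (filt M X n)"
  proof (cases "n = 0")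
    case True
    then show ?thesis unfolding threshold_rule_def first_ge1_eq_enat_iff by simp
  next
    case False
    then have "{\<omega> \<in> space M. threshold_rule v \<omega> = enat n} =
       (space (filt M X n) - (\<Union>i\<in>{1..<n}. X i -` B \<inter> space M)) \<inter> (X n -` B \<inter> space M)"
      unfolding threshold_rule_def first_ge1_eq_enat_iff B_def space_filt by auto
    also have "\<dots> \<in> sets (filt M X n)"
    proof (rule sets.Int)
      have "(\<Union>i\<in>{1..<n}. X i -` B \<inter> space M) \<in> sets (filt M X n)"
        using XB by (intro sets.finite_UN) auto
      then show "space (filt M X n) - (\<Union>i\<in>{1..<n}. X i -` B \<inter> space M) \<in> sets (filt M X n)"
        by (rule sets.Diff[OF sets.top])
    qed (use False XB in auto)
    finally show ?thesis .
  qed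
qed

lemma suminf_reached_threshold_le_1:
  assumes \<omega>: "\<omega> \<in> space M"
  shows "(\<Sum>i. ennreal (if v \<le> reward (X (Suc i) \<omega>) then 1 else 0)
            * indicator (running (threshold_rule v) i) \<omega>) \<le> 1"
proof (cases "threshold_rule v \<omega>")
  case (enat n)
  then have n: "1 \<le> n" "\<And>m. 1 \<le> m \<Longrightarrow> m < n \<Longrightarrow> reward (X m \<omega>) < v"
    unfolding threshold_rule_def first_ge1_eq_enat_iff by auto
  then obtain m where m: "n = Suc m" by (cases n) auto
  have "reward (X (Suc i) \<omega>) < v" if "i < m" for i
    using n(2)[of "Suc i"] m that by simp
  then have "(\<Sum>i<m. ennreal (if v \<le> reward (X (Suc i) \<omega>) then 1 else 0)) = 0"
    by (intro sum.neutral) (simp add: not_le)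
  then show ?thesis
    using suminf_indicator_running_enat[where N="threshold_rule v", OF \<omega> enat] m by simp
next
  case infinity
  then have "\<forall>n\<ge>1. reward (X n \<omega>) < v"
    unfolding threshold_rule_def first_ge1_eq_infinity_iff by auto
  then have "\<not> v \<le> reward (X (Suc i) \<omega>)" for i
    by (auto simp: not_le dest: spec[of _ "Suc i"])
  then show ?thesis
    using suminf_indicator_running_infinity[where N="threshold_rule v", OF \<omega> infinity] by simp
qed

text \<open>By Wald's identity, \<open>P(reward \<ge> v) E[N]\<close> is the expected number of observations up to
  \<open>N\<close> that reach \<open>v\<close>, and that number is at most one.\<close>
lemma expected_stop_threshold_rule_finite:
  assumes pos: "emeasure M {\<omega>\<in>space M. v \<le> reward (X 1 \<omega>)} > 0"
  shows "expected_stop (threshold_rule v) < \<top>"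
proof -
  define f where "f x = (if v \<le> reward x then 1 else 0 :: real)" for x
  have [measurable]: "f \<in> borel_measurable borel" unfolding f_def by measurable
  have "(\<integral>\<^sup>+\<omega>. ennreal (f (X 1 \<omega>)) \<partial>M)
      = (\<integral>\<^sup>+\<omega>. indicator {\<omega>\<in>space M. v \<le> reward (X 1 \<omega>)} \<omega> \<partial>M)"
    by (intro nn_integral_cong) (auto simp: f_def)
  also have "\<dots> = emeasure M {\<omega>\<in>space M. v \<le> reward (X 1 \<omega>)}"
    by (rule nn_integral_indicator) measurable
  finally have "emeasure M {\<omega>\<in>space M. v \<le> reward (X 1 \<omega>)} * expected_stop (threshold_rule v)
      = (\<integral>\<^sup>+\<omega>. (\<Sum>i. ennreal (f (X (Suc i) \<omega>)) * indicator (running (threshold_rule v) i) \<omega>) \<partial>M)"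
    using wald_identity[OF stop_time_ge1_threshold_rule, of f] by simp
  also have "\<dots> \<le> (\<integral>\<^sup>+\<omega>. 1 \<partial>M)"
    unfolding f_def by (intro nn_integral_mono suminf_reached_threshold_le_1)
  also have "\<dots> = 1" by (simp add: emeasure_space_1)
  finally show ?thesis
    using pos by (metis ennreal_mult_eq_top_iff ennreal_one_less_top linorder_not_le order_less_le
        top.not_eq_extremum)
qed

lemma AE_threshold_rule_finite:
  assumes "expected_stop (threshold_rule v) < \<top>"
  shows "AE \<omega> in M. threshold_rule v \<omega> \<noteq> \<infinity>"
proof (rule AE_stop_time_finite[OF stop_time_ge1_threshold_rule])
  show "(\<integral>\<^sup>+\<omega>. (\<Sum>i. indicator (running (threshold_rule v) i) \<omega>) \<partial>M) < \<top>"
    using assms unfolding expected_stop_def .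
  show "(\<Sum>i. indicator (running (threshold_rule v) i) \<omega> :: ennreal) = \<top>"
    if "\<omega> \<in> space M" "threshold_rule v \<omega> = \<infinity>" for \<omega>
    using suminf_indicator_running_infinity[where g="\<lambda>_. 1" and N="threshold_rule v", OF that]
      suminf_ennreal_one_eq_top
    by simp
qed

lemma nn_integral_stopped_Umax_threshold_rule:
  assumes finite: "AE \<omega> in M. threshold_rule (x * D) \<omega> \<noteq> \<infinity>" and "0 \<le> x"
  shows "(\<integral>\<^sup>+\<omega>. stopped (Umax reward_at) (threshold_rule (x * D)) \<omega> \<partial>M)
       = ennreal (x * D) + ennreal (excess x) * expected_stop (threshold_rule (x * D))"
proof -
  let ?N = "threshold_rule (x * D)"
  have v: "0 \<le> x * D" using assms(2) D_pos by simp
  have "AE \<omega> in M. stopped (Umax reward_at) ?N \<omega> = ennreal (x * D)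
      + (\<Sum>i. ennreal (reward (X (Suc i) \<omega>) - x * D) * indicator (running ?N i) \<omega>)"
    using finite AE_space
  proof eventually_elim
    case (elim \<omega>)
    then obtain n where n: "?N \<omega> = enat n" by auto
    then have "stopped (Umax reward_at) ?N \<omega>
        = ennreal (x * D + (\<Sum>i<n. max (reward (X (Suc i) \<omega>) - x * D) 0))"
      unfolding stopped_def using Umax_first_passage[of "x * D" \<omega> n]
      by (simp add: threshold_rule_def)
    also have "\<dots> = ennreal (x * D) + (\<Sum>i<n. ennreal (reward (X (Suc i) \<omega>) - x * D))"
      by (rule ennreal_add_sum_max_0[OF v])
    finally show ?case
      using suminf_indicator_running_enat[where N="?N", OF elim(2) n] by simp
  qed
  then show ?thesis
    unfolding nn_integral_threshold_plus_overshoot[OF stop_time_ge1_threshold_rule, symmetric]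
    by (rule nn_integral_cong_AE)
qed

lemma opt_rate_balance:
  "ennreal (opt_rate * D) + ennreal (excess opt_rate) * E
     = ennreal opt_rate * (ennreal D + ennreal mean_cost * E)"
  using excess_opt_rate opt_rate_pos D_pos mean_cost_pos
  by (simp add: ennreal_mult distrib_left mult.assoc)

lemma rate_le_opt_rate:
  assumes "N \<in> classC M (filt M X) time_at"
  shows "rate M (Umax reward_at) time_at N \<le> ennreal opt_rate"
proof -
  have N: "stop_time_ge1 M (filt M X) N" and finite: "(\<integral>\<^sup>+\<omega>. stopped time_at N \<omega> \<partial>M) < \<top>"
    using assms unfolding classC_def by auto
  have "AE \<omega> in M. N \<omega> \<noteq> \<infinity>"
    by (rule AE_stop_time_finite[OF N _ finite]) (simp add: stopped_def)
  note time = nn_integral_stopped_time_at[OF N this]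
  have "(\<integral>\<^sup>+\<omega>. stopped (Umax reward_at) N \<omega> \<partial>M)
      \<le> ennreal opt_rate * (\<integral>\<^sup>+\<omega>. stopped time_at N \<omega> \<partial>M)"
    using nn_integral_stopped_Umax_le[OF N \<open>AE \<omega> in M. N \<omega> \<noteq> \<infinity>\<close>, of opt_rate] opt_rate_pos
    unfolding time opt_rate_balance by simp
  then have "rate M (Umax reward_at) time_at N
      \<le> ennreal opt_rate * (\<integral>\<^sup>+\<omega>. stopped time_at N \<omega> \<partial>M) / (\<integral>\<^sup>+\<omega>. stopped time_at N \<omega> \<partial>M)"
    unfolding rate_def by (rule divide_right_mono_ennreal)
  also have "\<dots> = ennreal opt_rate"
    using finite D_pos unfolding time by (intro mult_divide_eq_ennreal) auto
  finally show ?thesis .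
qed

lemma emeasure_reward_ge_opt_threshold_pos:
  "0 < emeasure M {\<omega>\<in>space M. opt_rate * D \<le> reward (X 1 \<omega>)}"
proof (rule ccontr)
  assume "\<not> 0 < emeasure M {\<omega>\<in>space M. opt_rate * D \<le> reward (X 1 \<omega>)}"
  then have "AE \<omega> in M. \<not> opt_rate * D \<le> reward (X 1 \<omega>)"
    by (subst AE_iff_measurable[where N="{\<omega>\<in>space M. opt_rate * D \<le> reward (X 1 \<omega>)}"]) auto
  then have "AE \<omega> in M. max (reward (X 1 \<omega>) - opt_rate * D) 0 = 0"
    by eventually_elim simp
  then have "excess opt_rate = 0" unfolding excess_def by (rule integral_eq_zero_AE)
  then show False using excess_opt_rate opt_rate_pos mean_cost_pos by simp
qed

lemma threshold_rule_optimal: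
  "threshold_rule (opt_rate * D) \<in> classC M (filt M X) time_at"
  "rate M (Umax reward_at) time_at (threshold_rule (opt_rate * D)) = ennreal opt_rate"
proof -
  let ?N = "threshold_rule (opt_rate * D)"
  have expected: "expected_stop ?N < \<top>"
    by (rule expected_stop_threshold_rule_finite[OF emeasure_reward_ge_opt_threshold_pos])
  note finite = AE_threshold_rule_finite[OF expected]
  note time = nn_integral_stopped_time_at[OF stop_time_ge1_threshold_rule finite]
  have time_finite: "(\<integral>\<^sup>+\<omega>. stopped time_at ?N \<omega> \<partial>M) < \<top>"
    unfolding time using expected by (simp add: ennreal_mult_less_top)
  then show "?N \<in> classC M (filt M X) time_at"
    unfolding classC_def using stop_time_ge1_threshold_rule by simp
  have gain: "(\<integral>\<^sup>+\<omega>. stopped (Umax reward_at) ?N \<omega> \<partial>M)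
      = ennreal opt_rate * (\<integral>\<^sup>+\<omega>. stopped time_at ?N \<omega> \<partial>M)"
    using nn_integral_stopped_Umax_threshold_rule[OF finite] opt_rate_pos
    unfolding time opt_rate_balance by simp
  then show "rate M (Umax reward_at) time_at ?N = ennreal opt_rate"
    using time_finite D_pos unfolding rate_def gain time by (intro mult_divide_eq_ennreal) auto
qed

lemma SUP_rate_eq_opt_rate:
  "(SUP N\<in>classC M (filt M X) time_at. rate M (Umax reward_at) time_at N) = ennreal opt_rate"
  using threshold_rule_optimal rate_le_opt_rate
  by (intro antisym SUP_least) (auto intro: SUP_upper2)

end

lemma (in prob_space) AE_uniform_grid:
  fixes Z :: "'a \<Rightarrow> real"
  assumes [measurable]: "Z \<in> borel_measurable M" and "0 < h" "0 < K"
    and uniform: "\<And>j. j < K \<Longrightarrow> prob {\<omega>\<in>space M. Z \<omega> = real j * h} = 1 / real K"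
  shows "AE \<omega> in M. \<exists>j<K. Z \<omega> = real j * h"
proof -
  let ?A = "\<lambda>j. {\<omega>\<in>space M. Z \<omega> = real j * h}"
  have "prob (\<Union>j<K. ?A j) = (\<Sum>j<K. prob (?A j))"
    using \<open>0 < h\<close> by (intro finite_measure_finite_Union) (auto simp: disjoint_family_on_def)
  also have "\<dots> = 1" using uniform \<open>0 < K\<close> by simp
  finally have "AE \<omega> in M. \<omega> \<in> (\<Union>j<K. ?A j)" by (intro AE_prob_1)
  then show ?thesis by eventually_elim auto
qed

lemma (in prob_space) AE_eq_sum_uniform_grid:
  fixes Z :: "'a \<Rightarrow> real"
  assumes "Z \<in> borel_measurable M" and "0 < h" "0 < K"
    and "\<And>j. j < K \<Longrightarrow> prob {\<omega>\<in>space M. Z \<omega> = real j * h} = 1 / real K"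
  shows "AE \<omega> in M. Z \<omega> = (\<Sum>j<K. real j * h * indicator {\<omega>\<in>space M. Z \<omega> = real j * h} \<omega>)"
proof -
  have "AE \<omega> in M. \<exists>j<K. Z \<omega> = real j * h"
    by (rule AE_uniform_grid) (use assms in auto)
  with AE_space show ?thesis
  proof eventually_elim
    case (elim \<omega>)
    then obtain i where i: "i < K" "Z \<omega> = real i * h" by auto
    have "(\<Sum>j<K. real j * h * indicator {\<omega>\<in>space M. Z \<omega> = real j * h} \<omega>)
        = (\<Sum>j<K. if j = i then real i * h else 0)"
      using i elim(1) \<open>0 < h\<close> by (intro sum.cong) (auto split: split_indicator)
    then show ?case using i by simp
  qed
qed

lemma (in prob_space)
  fixes Z :: "'a \<Rightarrow> real"
  assumes [measurable]: "Z \<in> borel_measurable M" and "0 < h" "0 < K"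
    and uniform: "\<And>j. j < K \<Longrightarrow> prob {\<omega>\<in>space M. Z \<omega> = real j * h} = 1 / real K"
  shows integrable_uniform_grid: "integrable M Z"
    and integral_uniform_grid: "(\<integral>\<omega>. Z \<omega> \<partial>M) = (real K - 1) * h / 2"
proof -
  let ?A = "\<lambda>j. {\<omega>\<in>space M. Z \<omega> = real j * h}"
  note sum_eq = AE_eq_sum_uniform_grid[OF assms]
  have int_terms: "integrable M (\<lambda>\<omega>. real j * h * indicator (?A j) \<omega>)" for j
    by (intro integrable_mult_right integrable_real_indicator) (auto simp: less_top[symmetric])
  have "integrable M (\<lambda>\<omega>. \<Sum>j<K. real j * h * indicator (?A j) \<omega>)"
    using int_terms by (intro Bochner_Integration.integrable_sum)
  then show "integrable M Z"
    using integrable_cong_AE[OF _ _ sum_eq] by simp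
  have "(\<integral>\<omega>. Z \<omega> \<partial>M) = (\<integral>\<omega>. (\<Sum>j<K. real j * h * indicator (?A j) \<omega>) \<partial>M)"
    by (rule integral_cong_AE[OF _ _ sum_eq]) measurable
  also have "\<dots> = (\<Sum>j<K. real j * h * prob (?A j))"
    using int_terms by (subst Bochner_Integration.integral_sum) auto
  also have "\<dots> = (\<Sum>j<K. real j) * h / real K"
    using uniform by (simp add: sum_distrib_right sum_divide_distrib)
  also have "(\<Sum>j<K. real j) = real K * (real K - 1) / 2"
    by (induction K) (auto simp: field_simps)
  finally show "(\<integral>\<omega>. Z \<omega> \<partial>M) = (real K - 1) * h / 2"
    using \<open>0 < K\<close> by simp
qed

lemma (in prob_space) integral_mult_ind_indep:
  fixes Z S :: "'a \<Rightarrow> real"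
  assumes "indep_var borel Z borel S" "integrable M Z" and [measurable]: "S \<in> borel_measurable M"
  shows "(\<integral>\<omega>. Z \<omega> * ind (\<Gamma> \<le> S \<omega>) \<partial>M) = (\<integral>\<omega>. Z \<omega> \<partial>M) * prob {\<omega>\<in>space M. \<Gamma> \<le> S \<omega>}"
proof -
  have "indep_var borel (id \<circ> Z) borel ((\<lambda>s. ind (\<Gamma> \<le> s)) \<circ> S)"
    by (rule indep_var_compose[OF assms(1)]) (auto simp: ind_def)
  moreover have "integrable M (\<lambda>\<omega>. ind (\<Gamma> \<le> S \<omega>))"
    by (rule integrable_const_bound[where B=1]) (auto simp: ind_def)
  ultimately have "(\<integral>\<omega>. Z \<omega> * ind (\<Gamma> \<le> S \<omega>) \<partial>M) = (\<integral>\<omega>. Z \<omega> \<partial>M) * (\<integral>\<omega>. ind (\<Gamma> \<le> S \<omega>) \<partial>M)"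
    using indep_var_lebesgue_integral assms(2) by (simp add: o_def)
  also have "(\<integral>\<omega>. ind (\<Gamma> \<le> S \<omega>) \<partial>M) = (\<integral>\<omega>. indicator {\<omega>\<in>space M. \<Gamma> \<le> S \<omega>} \<omega> \<partial>M)"
    by (intro Bochner_Integration.integral_cong) (auto simp: ind_def)
  also have "\<dots> = prob {\<omega>\<in>space M. \<Gamma> \<le> S \<omega>}"
    by simp
  finally show ?thesis .
qed

definition cell_reward :: "real \<Rightarrow> real \<Rightarrow> real \<Rightarrow> real \<times> real \<times> real \<times> real \<Rightarrow> real" where
  "cell_reward W Tdata \<Gamma> = (\<lambda>(s, b, y, z). W * Tdata * (b * ln (1 + s)) * ind (\<Gamma> \<le> s))"

definition cell_cost :: "real \<Rightarrow> nat \<Rightarrow> real \<Rightarrow> real \<times> real \<times> real \<times> real \<Rightarrow> real" where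
  "cell_cost Tsyn L \<Gamma> = (\<lambda>(s, b, y, z). y + (real L - 1) * Tsyn + z * ind (\<Gamma> \<le> s))"

lemma cell_reward_obs: "cell_reward W Tdata \<Gamma> (obs SNR beta Y Z i \<omega>) = Rhat W Tdata \<Gamma> beta SNR i \<omega>"
  by (simp add: cell_reward_def obs_def Rhat_def Rsel_def)

lemma cell_cost_obs:
  "cell_cost Tsyn L \<Gamma> (obs SNR beta Y Z i \<omega>)
     = Y i \<omega> + (real L - 1) * Tsyn + Z i \<omega> * ind (\<Gamma> \<le> SNR i \<omega>)"
  by (simp add: cell_cost_def obs_def)

lemma borel_measurable_cell_reward[measurable]: "cell_reward W Tdata \<Gamma> \<in> borel_measurable borel"
  unfolding cell_reward_def ind_def by (simp add: borel_prod[symmetric] del: borel_prod)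

lemma borel_measurable_cell_cost[measurable]: "cell_cost Tsyn L \<Gamma> \<in> borel_measurable borel"
  unfolding cell_cost_def ind_def by (simp add: borel_prod[symmetric] del: borel_prod)

lemma borel_measurable_obs_components:
  fixes f :: "'a \<Rightarrow> real \<times> real \<times> real \<times> real"
  assumes "f \<in> borel_measurable M"
  shows "(\<lambda>\<omega>. fst (f \<omega>)) \<in> borel_measurable M"
    "(\<lambda>\<omega>. fst (snd (f \<omega>))) \<in> borel_measurable M"
    "(\<lambda>\<omega>. fst (snd (snd (f \<omega>)))) \<in> borel_measurable M"
    "(\<lambda>\<omega>. snd (snd (snd (f \<omega>)))) \<in> borel_measurable M"
  using assms by (simp_all add: borel_prod[symmetric] del: borel_prod)

locale cell_search = prob_space M
  for M :: "'a measure"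
    and SNR beta Y Z :: "nat \<Rightarrow> 'a \<Rightarrow> real"
    and Tsyn Tsib Tra Tdata W \<Gamma> :: real and L K :: nat +
  assumes Tsyn_pos: "Tsyn > 0" and Tsyn_le_Tsib: "Tsib \<ge> Tsyn" and K_pos: "K \<ge> 1"
    and Tsib_eq: "Tsib = real K * Tsyn"
    and Tra_pos: "Tra > 0" and Tdata_pos: "Tdata > 0" and W_pos: "W > 0" and L_pos: "L \<ge> 1"
    and meas: "\<And>i. obs SNR beta Y Z i \<in> borel_measurable M"
    and indep: "indep_vars (\<lambda>_. borel) (obs SNR beta Y Z) {1..}"
    and ident: "\<And>i. i \<ge> 1 \<Longrightarrow> distr M borel (obs SNR beta Y Z i) = distr M borel (obs SNR beta Y Z 1)"
    and SNR_nn: "\<And>i \<omega>. i \<ge> 1 \<Longrightarrow> \<omega> \<in> space M \<Longrightarrow> SNR i \<omega> \<ge> 0"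
    and beta_01: "\<And>i \<omega>. i \<ge> 1 \<Longrightarrow> \<omega> \<in> space M \<Longrightarrow> 0 \<le> beta i \<omega> \<and> beta i \<omega> \<le> 1"
    and Y_nn: "\<And>i \<omega>. i \<ge> 1 \<Longrightarrow> \<omega> \<in> space M \<Longrightarrow> Y i \<omega> \<ge> 0"
    and Y_mean: "\<And>i. i \<ge> 1 \<Longrightarrow> integrable M (Y i) \<and> (\<integral>\<omega>. Y i \<omega> \<partial>M) = Tsyn / 2"
    and Z_unif: "\<And>i j. i \<ge> 1 \<Longrightarrow> j < K \<Longrightarrow>
                   measure M {\<omega> \<in> space M. Z i \<omega> = real j * Tsyn} = 1 / real K"
    and Z_indep: "\<And>i. i \<ge> 1 \<Longrightarrow> indep_var borel (Z i) borel (SNR i)"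
    and R_sq: "integrable M (\<lambda>\<omega>. (Rsel beta SNR 1 \<omega>)\<^sup>2)"
    and R_pos: "measure M {\<omega> \<in> space M. Rsel beta SNR 1 \<omega> * ind (SNR 1 \<omega> \<ge> \<Gamma>) > 0} > 0"
begin

lemma measurable_components[measurable]:
  "SNR i \<in> borel_measurable M" "beta i \<in> borel_measurable M"
  "Y i \<in> borel_measurable M" "Z i \<in> borel_measurable M"
  using borel_measurable_obs_components[OF meas[of i]] by (simp_all add: obs_def)

lemma measurable_Rsel[measurable]: "Rsel beta SNR i \<in> borel_measurable M"
  unfolding Rsel_def by measurable

lemma Z_nonneg: "i \<ge> 1 \<Longrightarrow> AE \<omega> in M. 0 \<le> Z i \<omega>"
  using AE_uniform_grid[of "Z i" Tsyn K] Z_unif Tsyn_pos K_pos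
  by (auto elim!: eventually_mono)

lemma integrable_Z1: "integrable M (Z 1)"
  and integral_Z1: "(\<integral>\<omega>. Z 1 \<omega> \<partial>M) = (Tsib - Tsyn) / 2"
  using integrable_uniform_grid[of "Z 1" Tsyn K] integral_uniform_grid[of "Z 1" Tsyn K]
    Z_unif[of 1] Tsyn_pos K_pos Tsib_eq
  by (auto simp: algebra_simps)

lemma integrable_cell_reward: "integrable M (\<lambda>\<omega>. cell_reward W Tdata \<Gamma> (obs SNR beta Y Z 1 \<omega>))"
proof -
  have "integrable M (Rsel beta SNR 1)"
    by (rule square_integrable_imp_integrable) (use R_sq in auto)
  then have "integrable M (\<lambda>\<omega>. Rsel beta SNR 1 \<omega> * ind (\<Gamma> \<le> SNR 1 \<omega>))"
    by (rule Bochner_Integration.integrable_bound) (auto simp: ind_def Rsel_def)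
  then show ?thesis
    unfolding cell_reward_obs Rhat_def by (auto simp: mult.assoc)
qed

lemma integrable_Z1_mult_ind: "integrable M (\<lambda>\<omega>. Z 1 \<omega> * ind (\<Gamma> \<le> SNR 1 \<omega>))"
  by (rule Bochner_Integration.integrable_bound[OF integrable_Z1]) (auto simp: ind_def)

lemma integrable_cell_cost: "integrable M (\<lambda>\<omega>. cell_cost Tsyn L \<Gamma> (obs SNR beta Y Z 1 \<omega>))"
  unfolding cell_cost_obs using integrable_Z1_mult_ind Y_mean[of 1] by auto

lemma integral_cell_cost:
  "(\<integral>\<omega>. cell_cost Tsyn L \<Gamma> (obs SNR beta Y Z 1 \<omega>) \<partial>M)
     = (real L - 1/2) * Tsyn + (Tsib - Tsyn) / 2 * prob {\<omega> \<in> space M. SNR 1 \<omega> \<ge> \<Gamma>}"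
proof -
  have "(\<integral>\<omega>. cell_cost Tsyn L \<Gamma> (obs SNR beta Y Z 1 \<omega>) \<partial>M)
      = (\<integral>\<omega>. Y 1 \<omega> \<partial>M) + (real L - 1) * Tsyn + (\<integral>\<omega>. Z 1 \<omega> * ind (\<Gamma> \<le> SNR 1 \<omega>) \<partial>M)"
    unfolding cell_cost_obs using integrable_Z1_mult_ind Y_mean[of 1] by (simp add: prob_space)
  also have "(\<integral>\<omega>. Z 1 \<omega> * ind (\<Gamma> \<le> SNR 1 \<omega>) \<partial>M)
      = (Tsib - Tsyn) / 2 * prob {\<omega> \<in> space M. SNR 1 \<omega> \<ge> \<Gamma>}"
    using integral_mult_ind_indep[OF Z_indep[of 1] integrable_Z1] integral_Z1 by simp
  finally show ?thesis using Y_mean[of 1] by (simp add: algebra_simps)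
qed

sublocale reward_cost_stopping M "obs SNR beta Y Z" "cell_reward W Tdata \<Gamma>" "cell_cost Tsyn L \<Gamma>"
  "Tra + Tdata"
proof unfold_locales
  show "0 \<le> cell_reward W Tdata \<Gamma> (obs SNR beta Y Z i \<omega>)" if "i \<ge> 1" "\<omega> \<in> space M" for i \<omega>
    using SNR_nn[OF that] beta_01[OF that] W_pos Tdata_pos
    unfolding cell_reward_obs Rhat_def Rsel_def ind_def by simp
  show "AE \<omega> in M. 0 \<le> cell_cost Tsyn L \<Gamma> (obs SNR beta Y Z i \<omega>)" if "i \<ge> 1" for i
    using Z_nonneg[OF that] AE_space
    by eventually_elim (use Y_nn[OF that] L_pos Tsyn_pos in \<open>simp add: cell_cost_obs ind_def\<close>)
  show "0 < (\<integral>\<omega>. cell_cost Tsyn L \<Gamma> (obs SNR beta Y Z 1 \<omega>) \<partial>M)"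
    unfolding integral_cell_cost using L_pos Tsyn_pos Tsyn_le_Tsib
    by (intro add_pos_nonneg) auto
  have "{\<omega>\<in>space M. 0 < cell_reward W Tdata \<Gamma> (obs SNR beta Y Z 1 \<omega>)}
      = {\<omega> \<in> space M. Rsel beta SNR 1 \<omega> * ind (SNR 1 \<omega> \<ge> \<Gamma>) > 0}"
    unfolding cell_reward_obs Rhat_def using W_pos Tdata_pos
    by (auto simp: zero_less_mult_iff mult.assoc)
  then show "0 < prob {\<omega>\<in>space M. 0 < cell_reward W Tdata \<Gamma> (obs SNR beta Y Z 1 \<omega>)}"
    using R_pos by simp
  show "0 < Tra + Tdata" using Tra_pos Tdata_pos by simp
qed (fact meas indep ident integrable_cell_reward integrable_cell_cost borel_measurable_cell_reward
    borel_measurable_cell_cost)+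

lemma reward_at_eq: "reward_at = Rhat W Tdata \<Gamma> beta SNR"
  by (simp add: fun_eq_iff reward_at_def cell_reward_obs)

lemma time_at_eq: "time_at = Ttime Tsyn L Tra Tdata \<Gamma> SNR Y Z"
  by (simp add: fun_eq_iff time_at_def Ttime_def cell_cost_obs add.assoc)

lemma threshold_rule_eq:
  "threshold_rule (x * (Tra + Tdata))
     = (\<lambda>\<omega>. first_ge1 (\<lambda>n. Rsel beta SNR n \<omega> * ind (SNR n \<omega> \<ge> \<Gamma>)
                            \<ge> x * (Tra + Tdata) / (W * Tdata)))"
  using W_pos Tdata_pos unfolding threshold_rule_def cell_reward_obs Rhat_def
  by (simp add: pos_divide_le_eq mult.commute mult.left_commute)

lemma excess_eq: "excess x = (\<integral>\<omega>. max (reward_at 1 \<omega> - x * (Tra + Tdata)) 0 \<partial>M)"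
  unfolding excess_def reward_at_def ..

end

theorem proposition2:
  fixes M :: "'a measure"
    and SNR beta Y Z :: "nat \<Rightarrow> 'a \<Rightarrow> real"
    and Tsyn Tsib Tra Tdata W \<Gamma> :: real and L K :: nat
  assumes "prob_space M"
    and "Tsyn > 0" and "Tsib \<ge> Tsyn" and "K \<ge> 1" and "Tsib = real K * Tsyn"
    and "Tra > 0" and "Tdata > 0" and "W > 0" and "L \<ge> 1"
    and meas: "\<And>i. obs SNR beta Y Z i \<in> borel_measurable M"
    and indep: "prob_space.indep_vars M (\<lambda>_. borel) (obs SNR beta Y Z) {1..}"
    and ident: "\<And>i. i \<ge> 1 \<Longrightarrow> distr M borel (obs SNR beta Y Z i) = distr M borel (obs SNR beta Y Z 1)"
    and SNR_nn: "\<And>i \<omega>. i \<ge> 1 \<Longrightarrow> \<omega> \<in> space M \<Longrightarrow> SNR i \<omega> \<ge> 0"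
    and beta_01: "\<And>i \<omega>. i \<ge> 1 \<Longrightarrow> \<omega> \<in> space M \<Longrightarrow> 0 \<le> beta i \<omega> \<and> beta i \<omega> \<le> 1"
    and Y_nn: "\<And>i \<omega>. i \<ge> 1 \<Longrightarrow> \<omega> \<in> space M \<Longrightarrow> Y i \<omega> \<ge> 0"
    and Y_mean: "\<And>i. i \<ge> 1 \<Longrightarrow> integrable M (Y i) \<and> (\<integral>\<omega>. Y i \<omega> \<partial>M) = Tsyn / 2"
    and Z_unif: "\<And>i j. i \<ge> 1 \<Longrightarrow> j < K \<Longrightarrow>
                   measure M {\<omega> \<in> space M. Z i \<omega> = real j * Tsyn} = 1 / real K"
    and Z_indep: "\<And>i. i \<ge> 1 \<Longrightarrow> prob_space.indep_var M borel (Z i) borel (SNR i)"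
    and R_sq: "integrable M (\<lambda>\<omega>. (Rsel beta SNR 1 \<omega>)\<^sup>2)"
    and R_pos: "measure M {\<omega> \<in> space M. Rsel beta SNR 1 \<omega> * ind (SNR 1 \<omega> \<ge> \<Gamma>) > 0} > 0"
  shows "let Rh = Rhat W Tdata \<Gamma> beta SNR;
             T = Ttime Tsyn L Tra Tdata \<Gamma> SNR Y Z;
             U = Umax Rh;
             C = classC M (filt M (obs SNR beta Y Z)) T;
             lam = (SUP N\<in>C. rate M U T N);
             l = enn2real lam;
             Nstar = (\<lambda>\<omega>. first_ge1 (\<lambda>n. Rsel beta SNR n \<omega> * ind (SNR n \<omega> \<ge> \<Gamma>)
                                        \<ge> l * (Tra + Tdata) / (W * Tdata)))
         in lam < \<top> \<and> 0 < l \<and> Nstar \<in> C \<and> rate M U T Nstar = lam \<and>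
            (\<forall>x>0. (\<integral>\<omega>. max (Rh 1 \<omega> - x * (Tra + Tdata)) 0 \<partial>M)
                     = x * ((real L - 1/2) * Tsyn + (Tsib - Tsyn) / 2 * measure M {\<omega> \<in> space M. SNR 1 \<omega> \<ge> \<Gamma>})
                   \<longleftrightarrow> x = l)"
proof -
  interpret cell_search M SNR beta Y Z Tsyn Tsib Tra Tdata W \<Gamma> L K
    by (rule cell_search.intro, fact) (unfold_locales; fact assms)
  show ?thesis
    using threshold_rule_optimal opt_rate_pos excess_eq_iff_opt_rate
    unfolding Let_def reward_at_eq[symmetric] time_at_eq[symmetric] SUP_rate_eq_opt_rate
      threshold_rule_eq[symmetric] excess_eq[symmetric] mean_cost_def integral_cell_cost
    by (simp add: mult.commute)
qed

end
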